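(* Let weights $a_0,\dots,a_n>0$ be given, let $\omega\in\mathbb{C}[x_0,\dots,x_n]$ be weighted homogeneous of degree $d$ (with $\deg x_i=a_i$) having $0$ as its unique critical point, and let $t=\gcd(d,\sum_i a_i)$. Assume $a_i\le d/2$ for all $i$, and let $I=\{i\in\{0,\dots,n\}: a_i=1\}$. If $|I|>\frac{2t}{d-2}$, then $\mathrm{Jac}(\omega_g)_{t-k_g-\frac{d\,\mathrm{rk}W_g}{2}}=0$ for all $g\in\mu_d\setminus\{1\}$.
   Context: $\mu_d\subset\mathbb{C}^*$ is the group of $d$-th roots of unity. For $g\in\mu_d$ let $I_g=\{i: g^{a_i}\ne1\}$, $\mathrm{rk}W_g=|I_g|$, $k_g=-\sum_{i\in I_g}a_i$, and $\omega_g$ the image of $\omega$ in $\mathbb{C}[x_0,\dots,x_n]/(x_i)_{i\in I_g}$. $\mathrm{Jac}(\omega_g)$ denotes the Jacobian ring of $\omega_g$ (quotient of the polynomial ring in the variables $x_i$, $i\notin I_g$, by the partial derivatives of $\omega_g$), graded by $\deg x_i=a_i$; its pieces in negative degree are zero. *)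

theory Defs
  imports Complex_Main "HOL-Library.Poly_Mapping"
begin

text \<open>Polynomials in countably many variables x_0, x_1, ... with complex coefficients:
  a monomial is a finitely supported exponent vector, a polynomial a finitely
  supported coefficient function on monomials (a commutative ring via Poly_Mapping).\<close>

type_synonym cpoly = "(nat \<Rightarrow>\<^sub>0 nat) \<Rightarrow>\<^sub>0 complex"

definition pvars :: "cpoly \<Rightarrow> nat set" where
  "pvars p = (\<Union>m\<in>Poly_Mapping.keys p. Poly_Mapping.keys m)"

definition peval :: "cpoly \<Rightarrow> (nat \<Rightarrow> complex) \<Rightarrow> complex" where
  "peval p x = (\<Sum>m\<in>Poly_Mapping.keys p. Poly_Mapping.lookup p m * (\<Prod>i\<in>Poly_Mapping.keys m. x i ^ Poly_Mapping.lookup m i))"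

definition pdiff :: "nat \<Rightarrow> cpoly \<Rightarrow> cpoly" where
  "pdiff i p = (\<Sum>m\<in>Poly_Mapping.keys p. Poly_Mapping.single (m - Poly_Mapping.single i 1)
                               (Poly_Mapping.lookup p m * of_nat (Poly_Mapping.lookup m i)))"

definition wdeg :: "(nat \<Rightarrow> nat) \<Rightarrow> (nat \<Rightarrow>\<^sub>0 nat) \<Rightarrow> nat" where
  "wdeg a m = (\<Sum>i\<in>Poly_Mapping.keys m. a i * Poly_Mapping.lookup m i)"

text \<open>p is weighted homogeneous of (rational) weighted degree e: every monomial
  occurring in p has weighted degree e.  (The zero polynomial is homogeneous of
  every degree.)\<close>
definition whomog :: "(nat \<Rightarrow> nat) \<Rightarrow> rat \<Rightarrow> cpoly \<Rightarrow> bool" where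
  "whomog a e p \<longleftrightarrow> (\<forall>m\<in>Poly_Mapping.keys p. of_nat (wdeg a m) = e)"

text \<open>Image of p modulo the ideal (x_i)_{i in S}: drop every monomial involving
  some variable in S.\<close>
definition kill_vars :: "nat set \<Rightarrow> cpoly \<Rightarrow> cpoly" where
  "kill_vars S p = (\<Sum>m\<in>{m\<in>Poly_Mapping.keys p. Poly_Mapping.keys m \<inter> S = {}}. Poly_Mapping.single m (Poly_Mapping.lookup p m))"

definition in_jacobian_ideal :: "nat set \<Rightarrow> cpoly \<Rightarrow> cpoly \<Rightarrow> bool" where
  "in_jacobian_ideal V q p \<longleftrightarrow>
     (\<exists>c :: nat \<Rightarrow> cpoly. (\<forall>i\<in>V. pvars (c i) \<subseteq> V) \<and> p = (\<Sum>i\<in>V. c i * pdiff i q))"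

text \<open>The graded piece of weighted degree e of Jac(q) = C[x_i : i in V]/(dq/dx_i)_{i in V}
  vanishes: every weighted homogeneous polynomial of degree e in the variables V lies in
  the Jacobian ideal.  Since the Jacobian ideal of a weighted homogeneous q is homogeneous,
  this is exactly the vanishing of the degree-e piece of the quotient.  If e is not a
  non-negative integer, only p = 0 qualifies, so the piece is (correctly) zero.\<close>
definition jac_piece_zero :: "(nat \<Rightarrow> nat) \<Rightarrow> nat set \<Rightarrow> cpoly \<Rightarrow> rat \<Rightarrow> bool" where
  "jac_piece_zero a V q e \<longleftrightarrow>
     (\<forall>p. pvars p \<subseteq> V \<and> whomog a e p \<longrightarrow> in_jacobian_ideal V q p)"

definition Ig :: "nat \<Rightarrow> (nat \<Rightarrow> nat) \<Rightarrow> complex \<Rightarrow> nat set" where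
  "Ig n a g = {i\<in>{0..n}. g ^ a i \<noteq> 1}"

end

theory Submission
  imports Defs
begin

text \<open>The graded piece in question sits in negative degree, so it vanishes for degree reasons
  alone. Every index with a_i = 1 lies in I_g, as g^1 = g \<noteq> 1. Each index of I_g contributes
  a_i - d/2 \<le> 0 to the degree t + \<Sum>_{i\<in>I_g} (a_i - d/2), and each of the |I| indices of weight
  one contributes 1 - d/2, so the degree is at most t - |I|(d - 2)/2 < 0.\<close>

lemma whomog_neg_degree_eq_0:
  assumes "e < 0" and "whomog a e p"
  shows "p = 0"
proof -
  have "Poly_Mapping.keys p = {}"
    using assms unfolding whomog_def by (metis all_not_in_conv of_nat_0_le_iff not_le)
  then show ?thesis by simp
qed

lemma jac_piece_zero_neg_degree:
  assumes "e < 0"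
  shows "jac_piece_zero a V q e"
  unfolding jac_piece_zero_def in_jacobian_ideal_def
proof (intro allI impI)
  fix p assume "pvars p \<subseteq> V \<and> whomog a e p"
  then have "p = 0" using assms whomog_neg_degree_eq_0 by blast
  then show "\<exists>c. (\<forall>i\<in>V. pvars (c i) \<subseteq> V) \<and> p = (\<Sum>i\<in>V. c i * pdiff i q)"
    by (intro exI[of _ "\<lambda>_. 0"]) (simp add: pvars_def)
qed

lemma weight_one_subset_Ig:
  assumes "g \<noteq> 1"
  shows "{i\<in>{0..n}. a i = 1} \<subseteq> Ig n a g"
  using assms unfolding Ig_def by auto

lemma sum_weights_minus_half_le:
  fixes a :: "nat \<Rightarrow> nat" and d :: nat
  assumes "finite J" and "I \<subseteq> J" and "\<forall>i\<in>I. a i = 1" and "\<forall>i\<in>J. 2 * a i \<le> d"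
  shows "(\<Sum>i\<in>J. of_nat (a i)) - of_nat d * of_nat (card J) / 2
           \<le> (of_nat (card I) * (2 - of_nat d) / 2 :: 'a :: linordered_field)"
proof -
  define c :: "nat \<Rightarrow> 'a" where "c i = of_nat (a i) - of_nat d / 2" for i
  have "(\<Sum>i\<in>J. of_nat (a i)) - of_nat d * of_nat (card J) / 2 = (\<Sum>i\<in>J. c i)"
    by (simp add: c_def sum_subtractf)
  also have "\<dots> = (\<Sum>i\<in>I. c i) + (\<Sum>i\<in>J - I. c i)"
    using assms(1,2) by (metis sum.subset_diff add.commute)
  also have "(\<Sum>i\<in>I. c i) = of_nat (card I) * (2 - of_nat d) / 2"
    using assms(3) by (simp add: c_def field_simps)
  also have "(\<Sum>i\<in>J - I. c i) \<le> 0"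
  proof (rule sum_nonpos)
    fix i assume "i \<in> J - I"
    then have "2 * of_nat (a i) \<le> (of_nat d :: 'a)"
      using assms(4) by (metis DiffD1 of_nat_le_iff of_nat_mult of_nat_numeral)
    then show "c i \<le> 0" by (simp add: c_def field_simps)
  qed
  finally show ?thesis by simp
qed

theorem lemma3p9:
  fixes n d :: nat and a :: "nat \<Rightarrow> nat" and \<omega> :: cpoly
  assumes wpos: "\<forall>i\<in>{0..n}. a i > 0"
    and vars: "pvars \<omega> \<subseteq> {0..n}"
    and homog: "whomog a (of_nat d) \<omega>"
    and crit: "\<forall>x :: nat \<Rightarrow> complex.
                 (\<forall>i\<in>{0..n}. peval (pdiff i \<omega>) x = 0) \<longrightarrow> (\<forall>i\<in>{0..n}. x i = 0)"
    and half: "\<forall>i\<in>{0..n}. 2 * a i \<le> d"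
    and big: "real (card {i\<in>{0..n}. a i = 1}) * (real d - 2)
                > 2 * real (gcd d (\<Sum>i\<in>{0..n}. a i))"
  shows "\<forall>g :: complex. g ^ d = 1 \<and> g \<noteq> 1 \<longrightarrow>
           jac_piece_zero a ({0..n} - Ig n a g) (kill_vars (Ig n a g) \<omega>)
             (of_nat (gcd d (\<Sum>i\<in>{0..n}. a i)) + of_int (\<Sum>i\<in>Ig n a g. int (a i))
              - of_nat d * of_nat (card (Ig n a g)) / 2)"
proof (intro allI impI jac_piece_zero_neg_degree)
  fix g :: complex
  assume "g ^ d = 1 \<and> g \<noteq> 1"
  define J where "J = Ig n a g"
  define m where "m = card {i\<in>{0..n}. a i = 1}"
  define t where "t = gcd d (\<Sum>i\<in>{0..n}. a i)"
  have "(\<Sum>i\<in>J. of_nat (a i)) - of_nat d * of_nat (card J) / 2 \<le> (of_nat m * (2 - of_nat d) / 2 :: rat)"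
    unfolding m_def J_def
    by (rule sum_weights_minus_half_le) (use \<open>g ^ d = 1 \<and> g \<noteq> 1\<close> half weight_one_subset_Ig
        in \<open>auto simp: Ig_def\<close>)
  moreover have "real_of_int (int m * (int d - 2)) > real_of_int (2 * int t)"
    using big unfolding m_def t_def by simp
  then have "(of_int (int m * (int d - 2)) :: rat) > of_int (2 * int t)"
    by (simp only: of_int_less_iff)
  ultimately show "of_nat t + of_int (\<Sum>i\<in>J. int (a i)) - of_nat d * of_nat (card J) / 2 < (0 :: rat)"
    by (simp add: field_simps)
qed

end
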